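(* Let $\rho$ be an irreducible representation of $\mathcal U=U_h^{2,q}(\mathbb{F}_{q^2})$ in which $H_{2(h-1)}$ acts via a character $\psi$ of conductor $q^2$ (i.e. $1+a\tau^{2(h-1)}$ acts by $\psi(a)$). Then $\rho$ is uniquely determined up to isomorphism by its restriction to $H$: if $\rho'$ is another such irreducible representation with $\rho'|_H\cong\rho|_H$, then $\rho'\cong\rho$.
   Context: Let $p$ be a prime, $q$ a power of $p$, $\ell\ne p$, and $h\ge2$ an integer; representations are over $\overline{\mathbb{Q}}_\ell$. For a commutative $\mathbb{F}_q$-algebra $A$, $U_h^{2,q}(A)$ is the set of formal expressions $1+\sum_{i=1}^{2(h-1)}a_i\tau^i$ ($a_i\in A$) with multiplication obtained by extending $(a\tau^i)(b\tau^j)=ab^{q^i}\tau^{i+j}$ bi-additively, where $\tau^0=1$ and $\tau^k=0$ for $k>2(h-1)$. In $\mathcal U=U_h^{2,q}(\mathbb{F}_{q^2})$ let $H=\{1+\sum a_i\tau^i: a_i=0\text{ for all odd }i\}$ and $H_{2(h-1)}=\{1+a\tau^{2(h-1)}: a\in\mathbb{F}_{q^2}\}$. An additive character $\psi\colon\mathbb{F}_{q^2}\to\overline{\mathbb{Q}}_\ell^\times$ has conductor $q^2$ if there exists $x$ with $\psi(x^q)\ne\psi(x)$. *)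

theory Defs
  imports "Jordan_Normal_Form.Matrix"
begin

(* The group U_h^{2,q}(F_{q^2}).  An element 1 + sum_{i=1}^{N} a_i tau^i, N = 2(h-1),
   is encoded by its coefficient function a :: nat => 'f with a 0 = 1 and a i = 0 for i > N. *)

definition U_N :: "nat \<Rightarrow> nat" where
  "U_N h = 2 * (h - 1)"

definition U_carrier :: "nat \<Rightarrow> (nat \<Rightarrow> 'f::field) set" where
  "U_carrier h = {a. a 0 = 1 \<and> (\<forall>i. U_N h < i \<longrightarrow> a i = 0)}"

(* (a tau^i)(b tau^j) = a b^{q^i} tau^{i+j}, extended bi-additively, truncated above N *)
definition U_mult :: "nat \<Rightarrow> nat \<Rightarrow> (nat \<Rightarrow> 'f::field) \<Rightarrow> (nat \<Rightarrow> 'f) \<Rightarrow> (nat \<Rightarrow> 'f)" where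
  "U_mult q h a b = (\<lambda>k. if k \<le> U_N h then (\<Sum>i=0..k. a i * (b (k - i)) ^ (q ^ i)) else 0)"

definition U_one :: "nat \<Rightarrow> 'f::field" where
  "U_one = (\<lambda>i. if i = 0 then 1 else 0)"

definition U_H :: "nat \<Rightarrow> (nat \<Rightarrow> 'f::field) set" where
  "U_H h = {a \<in> U_carrier h. \<forall>i. odd i \<longrightarrow> a i = 0}"

definition U_top :: "nat \<Rightarrow> 'f \<Rightarrow> (nat \<Rightarrow> 'f::field)" where
  "U_top h x = (\<lambda>i. if i = 0 then 1 else if i = U_N h then x else 0)"

definition is_rep :: "'g set \<Rightarrow> ('g \<Rightarrow> 'g \<Rightarrow> 'g) \<Rightarrow> 'g \<Rightarrow> nat \<Rightarrow> ('g \<Rightarrow> complex mat) \<Rightarrow> bool" where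
  "is_rep G mul e n \<rho> \<longleftrightarrow>
     (\<forall>g\<in>G. \<rho> g \<in> carrier_mat n n) \<and>
     (\<forall>g\<in>G. \<forall>g'\<in>G. \<rho> (mul g g') = \<rho> g * \<rho> g') \<and>
     \<rho> e = 1\<^sub>m n"

definition invariant_subspace :: "'g set \<Rightarrow> nat \<Rightarrow> ('g \<Rightarrow> complex mat) \<Rightarrow> complex vec set \<Rightarrow> bool" where
  "invariant_subspace G n \<rho> W \<longleftrightarrow>
     W \<subseteq> carrier_vec n \<and> 0\<^sub>v n \<in> W \<and>
     (\<forall>v\<in>W. \<forall>w\<in>W. v + w \<in> W) \<and>
     (\<forall>c. \<forall>v\<in>W. c \<cdot>\<^sub>v v \<in> W) \<and>
     (\<forall>g\<in>G. \<forall>v\<in>W. \<rho> g *\<^sub>v v \<in> W)"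

definition irreducible_rep :: "'g set \<Rightarrow> ('g \<Rightarrow> 'g \<Rightarrow> 'g) \<Rightarrow> 'g \<Rightarrow> nat \<Rightarrow> ('g \<Rightarrow> complex mat) \<Rightarrow> bool" where
  "irreducible_rep G mul e n \<rho> \<longleftrightarrow>
     is_rep G mul e n \<rho> \<and> 0 < n \<and>
     (\<forall>W. invariant_subspace G n \<rho> W \<longrightarrow> W = {0\<^sub>v n} \<or> W = carrier_vec n)"

definition rep_iso_on :: "'g set \<Rightarrow> nat \<Rightarrow> ('g \<Rightarrow> complex mat) \<Rightarrow> nat \<Rightarrow> ('g \<Rightarrow> complex mat) \<Rightarrow> bool" where
  "rep_iso_on S n \<rho> n' \<rho>' \<longleftrightarrow> n = n' \<and>
     (\<exists>P \<in> carrier_mat n n. invertible_mat P \<and> (\<forall>g\<in>S. P * \<rho> g = \<rho>' g * P))"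

definition additive_char :: "('f::field \<Rightarrow> complex) \<Rightarrow> bool" where
  "additive_char \<psi> \<longleftrightarrow> (\<forall>x y. \<psi> (x + y) = \<psi> x * \<psi> y) \<and> (\<forall>x. \<psi> x \<noteq> 0)"

end

(*
  On H the characters of rho and rho' agree. An element g of U can be brought into H by
  conjugations that clear its odd coefficients from the bottom up: if r is the first odd index
  with g_r \<noteq> 0 and some earlier even coefficient g_e lies outside F_q, conjugation by
  1 + w tau^(r-e) kills g_r for a suitable w. If instead all earlier even coefficients lie in F_q,
  conjugation by 1 + w tau^(N-r) (N = 2(h-1)) just multiplies g by the central element
  1 + (w g_r^q - g_r w^q) tau^N, on which both representations act by the scalar
  psi(w g_r^q - g_r w^q); as psi has conductor q^2 this scalar is not 1 for some w, so both traces
  of g vanish. Hence rho and rho' have the same character, and the usual averaging argument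
  (orthogonality of characters together with Schur's lemma) yields an isomorphism.
*)
theory Submission
  imports Defs "Jordan_Normal_Form.Char_Poly"
begin

section \<open>Traces and entrywise sums of matrices\<close>

definition mat_trace :: "'a::comm_ring_1 mat \<Rightarrow> 'a" where
  "mat_trace A = (\<Sum>i<dim_row A. A $$ (i, i))"

text \<open>Matrices of different dimensions form no additive monoid, so sums of families of
  \<open>n \<times> n\<close> matrices are taken entrywise.\<close>

definition mat_sum :: "nat \<Rightarrow> 'i set \<Rightarrow> ('i \<Rightarrow> 'a::comm_ring_1 mat) \<Rightarrow> 'a mat" where
  "mat_sum n I M = mat n n (\<lambda>(i, j). \<Sum>x\<in>I. M x $$ (i, j))"

definition mat_unit :: "nat \<Rightarrow> nat \<Rightarrow> nat \<Rightarrow> 'a::comm_ring_1 mat" where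
  "mat_unit n i j = mat n n (\<lambda>(a, b). if a = i \<and> b = j then 1 else 0)"

lemma mat_trace_carrier: "A \<in> carrier_mat n n \<Longrightarrow> mat_trace A = (\<Sum>i<n. A $$ (i, i))"
  by (simp add: mat_trace_def)

lemma index_mult_mat_sum:
  assumes "A \<in> carrier_mat n m" "B \<in> carrier_mat m p" "i < n" "j < p"
  shows "(A * B) $$ (i, j) = (\<Sum>k<m. A $$ (i, k) * B $$ (k, j))"
  using assms by (simp add: scalar_prod_def atLeast0LessThan)

lemma mat_trace_mult_comm:
  assumes A: "A \<in> carrier_mat n m" and B: "B \<in> carrier_mat m n"
  shows "mat_trace (A * B) = mat_trace (B * A)"
proof -
  have "mat_trace (A * B) = (\<Sum>i<n. \<Sum>k<m. A $$ (i, k) * B $$ (k, i))"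
    using A B index_mult_mat_sum[OF A B] by (auto simp: mat_trace_def intro!: sum.cong)
  also have "\<dots> = (\<Sum>k<m. \<Sum>i<n. B $$ (k, i) * A $$ (i, k))"
    by (subst sum.swap) (simp add: mult.commute)
  also have "\<dots> = mat_trace (B * A)"
    using A B index_mult_mat_sum[OF B A] by (auto simp: mat_trace_def intro!: sum.cong)
  finally show ?thesis .
qed

lemma mat_trace_similar:
  fixes A :: "'a::field mat"
  assumes A: "A \<in> carrier_mat n n" and Y: "Y \<in> carrier_mat n n" and S: "S \<in> carrier_mat n n"
    and YS: "Y * S = 1\<^sub>m n"
  shows "mat_trace (Y * A * S) = mat_trace A"
proof -
  have SY: "S * Y = 1\<^sub>m n" by (rule mat_mult_left_right_inverse[OF Y S YS])
  have "mat_trace (Y * A * S) = mat_trace (Y * (A * S))" using A Y S by simp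
  also have "\<dots> = mat_trace (A * S * Y)" using A Y S by (intro mat_trace_mult_comm) auto
  also have "\<dots> = mat_trace (A * (S * Y))" using A Y S by simp
  finally show ?thesis using SY A by simp
qed

lemma mat_trace_smult: "A \<in> carrier_mat n n \<Longrightarrow> mat_trace (c \<cdot>\<^sub>m A) = c * mat_trace A"
  by (auto simp: mat_trace_def sum_distrib_left intro!: sum.cong)

lemma mat_trace_one: "mat_trace (1\<^sub>m n) = of_nat n"
  by (simp add: mat_trace_def)

lemma mat_trace_mat_unit: "i < n \<Longrightarrow> mat_trace (mat_unit n i j) = (if i = j then 1 else 0)"
  by (cases "i = j") (auto simp: mat_trace_def mat_unit_def intro!: sum.neutral)

lemma mat_unit_carrier [simp]: "mat_unit n i j \<in> carrier_mat n n"
  by (simp add: mat_unit_def)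

lemma index_mult_mat_unit:
  assumes A: "A \<in> carrier_mat n n" and Y: "Y \<in> carrier_mat n n" and i: "i < n" and j: "j < n"
  shows "(A * mat_unit n i j * Y) $$ (i, j) = A $$ (i, i) * Y $$ (j, j)"
proof -
  have AE: "(A * mat_unit n i j) $$ (i, k) = (if k = j then A $$ (i, i) else 0)" if "k < n" for k
  proof -
    have "(A * mat_unit n i j) $$ (i, k) = (\<Sum>l<n. A $$ (i, l) * mat_unit n i j $$ (l, k))"
      by (rule index_mult_mat_sum[OF A mat_unit_carrier i that])
    also have "\<dots> = (\<Sum>l<n. if l = i then (if k = j then A $$ (i, i) else 0) else 0)"
      using that by (intro sum.cong) (auto simp: mat_unit_def)
    finally show ?thesis using i by simp
  qed
  have "(A * mat_unit n i j * Y) $$ (i, j) = (\<Sum>k<n. (A * mat_unit n i j) $$ (i, k) * Y $$ (k, j))"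
    by (rule index_mult_mat_sum[OF mult_carrier_mat[OF A mat_unit_carrier] Y i j])
  also have "\<dots> = (\<Sum>k<n. if k = j then A $$ (i, i) * Y $$ (j, j) else 0)"
    by (intro sum.cong) (auto simp: AE)
  finally show ?thesis using j by simp
qed

lemma mat_sum_carrier [simp]: "mat_sum n I M \<in> carrier_mat n n"
  by (simp add: mat_sum_def)

lemma index_mat_sum [simp]: "i < n \<Longrightarrow> j < n \<Longrightarrow> mat_sum n I M $$ (i, j) = (\<Sum>x\<in>I. M x $$ (i, j))"
  by (simp add: mat_sum_def)

lemma mult_mat_sum_left:
  assumes A: "A \<in> carrier_mat n n" and M: "\<And>x. x \<in> I \<Longrightarrow> M x \<in> carrier_mat n n"
  shows "A * mat_sum n I M = mat_sum n I (\<lambda>x. A * M x)"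
proof (rule eq_matI)
  fix i j assume "i < dim_row (mat_sum n I (\<lambda>x. A * M x))" "j < dim_col (mat_sum n I (\<lambda>x. A * M x))"
  then have i: "i < n" and j: "j < n" by (simp_all add: mat_sum_def)
  have "(A * mat_sum n I M) $$ (i, j) = (\<Sum>k<n. A $$ (i, k) * mat_sum n I M $$ (k, j))"
    by (rule index_mult_mat_sum[OF A mat_sum_carrier i j])
  also have "\<dots> = (\<Sum>k<n. \<Sum>x\<in>I. A $$ (i, k) * M x $$ (k, j))"
    using j by (intro sum.cong) (auto simp: sum_distrib_left)
  also have "\<dots> = (\<Sum>x\<in>I. \<Sum>k<n. A $$ (i, k) * M x $$ (k, j))"
    by (rule sum.swap)
  also have "\<dots> = (\<Sum>x\<in>I. (A * M x) $$ (i, j))"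
    using M by (intro sum.cong refl) (rule index_mult_mat_sum[OF A _ i j, symmetric])
  finally show "(A * mat_sum n I M) $$ (i, j) = mat_sum n I (\<lambda>x. A * M x) $$ (i, j)"
    using i j by simp
qed (use A in \<open>auto simp: mat_sum_def\<close>)

lemma mult_mat_sum_right:
  assumes A: "A \<in> carrier_mat n n" and M: "\<And>x. x \<in> I \<Longrightarrow> M x \<in> carrier_mat n n"
  shows "mat_sum n I M * A = mat_sum n I (\<lambda>x. M x * A)"
proof (rule eq_matI)
  fix i j assume "i < dim_row (mat_sum n I (\<lambda>x. M x * A))" "j < dim_col (mat_sum n I (\<lambda>x. M x * A))"
  then have i: "i < n" and j: "j < n" by (simp_all add: mat_sum_def)
  have "(mat_sum n I M * A) $$ (i, j) = (\<Sum>k<n. mat_sum n I M $$ (i, k) * A $$ (k, j))"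
    by (rule index_mult_mat_sum[OF mat_sum_carrier A i j])
  also have "\<dots> = (\<Sum>k<n. \<Sum>x\<in>I. M x $$ (i, k) * A $$ (k, j))"
    using i by (intro sum.cong) (auto simp: sum_distrib_right)
  also have "\<dots> = (\<Sum>x\<in>I. \<Sum>k<n. M x $$ (i, k) * A $$ (k, j))"
    by (rule sum.swap)
  also have "\<dots> = (\<Sum>x\<in>I. (M x * A) $$ (i, j))"
    using M by (intro sum.cong refl) (rule index_mult_mat_sum[OF _ A i j, symmetric])
  finally show "(mat_sum n I M * A) $$ (i, j) = mat_sum n I (\<lambda>x. M x * A) $$ (i, j)"
    using i j by simp
qed (use A in \<open>auto simp: mat_sum_def\<close>)

lemma mat_trace_mat_sum:
  assumes M: "\<And>x. x \<in> I \<Longrightarrow> M x \<in> carrier_mat n n"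
  shows "mat_trace (mat_sum n I M) = (\<Sum>x\<in>I. mat_trace (M x))"
proof -
  have "mat_trace (mat_sum n I M) = (\<Sum>i<n. \<Sum>x\<in>I. M x $$ (i, i))"
    by (auto simp: mat_trace_def mat_sum_def intro!: sum.cong)
  also have "\<dots> = (\<Sum>x\<in>I. \<Sum>i<n. M x $$ (i, i))"
    by (rule sum.swap)
  also have "\<dots> = (\<Sum>x\<in>I. mat_trace (M x))"
    by (intro sum.cong refl) (simp add: mat_trace_carrier[OF M])
  finally show ?thesis .
qed

lemma invertible_matE:
  assumes "invertible_mat P" and P: "P \<in> carrier_mat n n"
  obtains Q where "Q \<in> carrier_mat n n" "P * Q = 1\<^sub>m n" "Q * P = 1\<^sub>m n"
proof -
  obtain Q where PQ: "P * Q = 1\<^sub>m n" and QP: "Q * P = 1\<^sub>m (dim_row Q)"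
    using assms unfolding invertible_mat_def inverts_mat_def by auto
  have "dim_col Q = n" using arg_cong[OF PQ, of dim_col] by simp
  moreover have "dim_row Q = n" using arg_cong[OF QP, of dim_col] P by simp
  ultimately show ?thesis using that PQ QP by auto
qed

section \<open>Schur's lemma\<close>

lemma intertwiner_eq_zero_if_singular:
  fixes \<rho> \<rho>' :: "'g \<Rightarrow> complex mat"
  assumes irr: "irreducible_rep G mul e n \<rho>"
    and M: "M \<in> carrier_mat n n"
    and \<rho>': "\<And>g. g \<in> G \<Longrightarrow> \<rho>' g \<in> carrier_mat n n"
    and inter: "\<And>g. g \<in> G \<Longrightarrow> M * \<rho> g = \<rho>' g * M"
    and v: "v \<in> carrier_vec n" "v \<noteq> 0\<^sub>v n" "M *\<^sub>v v = 0\<^sub>v n"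
  shows "M = 0\<^sub>m n n"
proof -
  have \<rho>: "\<And>g. g \<in> G \<Longrightarrow> \<rho> g \<in> carrier_mat n n"
    using irr by (simp add: irreducible_rep_def is_rep_def)
  define W where "W = {u \<in> carrier_vec n. M *\<^sub>v u = 0\<^sub>v n}"
  have "invariant_subspace G n \<rho> W"
    unfolding invariant_subspace_def
  proof (intro conjI ballI allI)
    show "W \<subseteq> carrier_vec n" "0\<^sub>v n \<in> W"
      using M by (auto simp: W_def)
  next
    fix u w assume "u \<in> W" "w \<in> W"
    then show "u + w \<in> W" using M by (auto simp: W_def mult_add_distrib_mat_vec)
  next
    fix c :: complex and u assume "u \<in> W"
    then show "c \<cdot>\<^sub>v u \<in> W" using M by (auto simp: W_def mult_mat_vec)
  next
    fix g u assume g: "g \<in> G" and u: "u \<in> W"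
    then have u': "u \<in> carrier_vec n" "M *\<^sub>v u = 0\<^sub>v n" by (auto simp: W_def)
    have "M *\<^sub>v (\<rho> g *\<^sub>v u) = (\<rho>' g * M) *\<^sub>v u"
      using M \<rho>[OF g] u'(1) inter[OF g] by (metis assoc_mult_mat_vec)
    also have "\<dots> = 0\<^sub>v n"
      using M \<rho>'[OF g] u' by auto
    finally show "\<rho> g *\<^sub>v u \<in> W" using \<rho>[OF g] u' by (simp add: W_def)
  qed
  moreover have "W \<noteq> {0\<^sub>v n}" using v by (auto simp: W_def)
  ultimately have W: "W = carrier_vec n" using irr by (auto simp: irreducible_rep_def)
  show ?thesis
  proof (rule eq_matI)
    fix i j assume "i < dim_row (0\<^sub>m n n :: complex mat)" "j < dim_col (0\<^sub>m n n :: complex mat)"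
    then have ij: "i < n" "j < n" by auto
    have "unit_vec n j \<in> W" using W by simp
    then have "(M *\<^sub>v unit_vec n j) $ i = 0" using ij by (simp add: W_def)
    then show "M $$ (i, j) = 0\<^sub>m n n $$ (i, j)" using M ij by simp
  qed (use M in auto)
qed

lemma intertwiner_invertible:
  fixes \<rho> \<rho>' :: "'g \<Rightarrow> complex mat"
  assumes irr: "irreducible_rep G mul e n \<rho>"
    and M: "M \<in> carrier_mat n n"
    and \<rho>': "\<And>g. g \<in> G \<Longrightarrow> \<rho>' g \<in> carrier_mat n n"
    and inter: "\<And>g. g \<in> G \<Longrightarrow> M * \<rho> g = \<rho>' g * M"
    and "M \<noteq> 0\<^sub>m n n"
  shows "invertible_mat M"
proof -
  have "det M \<noteq> 0"
  proof
    assume "det M = 0"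
    then obtain v where "v \<in> carrier_vec n" "v \<noteq> 0\<^sub>v n" "M *\<^sub>v v = 0\<^sub>v n"
      using det_0_iff_vec_prod_zero[OF M] by blast
    then show False using intertwiner_eq_zero_if_singular[OF irr M \<rho>' inter] assms(5) by blast
  qed
  from det_non_zero_imp_unit[OF M this, of "()"]
  obtain B where "B \<in> carrier_mat n n" "B * M = 1\<^sub>m n" "M * B = 1\<^sub>m n"
    unfolding Units_def ring_mat_def by auto
  then show ?thesis using M unfolding invertible_mat_def inverts_mat_def by auto
qed

lemma complex_mat_has_eigenvalue:
  assumes "Z \<in> carrier_mat n n" and "0 < n"
  obtains c :: complex where "eigenvalue Z c"
proof -
  have "degree (char_poly Z) > 0" using degree_monic_char_poly[OF assms(1)] assms(2) by simp
  then have "\<not> constant (poly (char_poly Z))" by (simp add: constant_degree)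
  then obtain c where "poly (char_poly Z) c = 0" using fundamental_theorem_of_algebra by blast
  then show ?thesis using that eigenvalue_root_char_poly[OF assms(1)] by blast
qed

lemma commuting_mat_scalar:
  fixes \<rho> :: "'g \<Rightarrow> complex mat"
  assumes irr: "irreducible_rep G mul e n \<rho>"
    and Z: "Z \<in> carrier_mat n n"
    and com: "\<And>g. g \<in> G \<Longrightarrow> Z * \<rho> g = \<rho> g * Z"
  obtains c where "Z = c \<cdot>\<^sub>m 1\<^sub>m n"
proof -
  have \<rho>: "\<And>g. g \<in> G \<Longrightarrow> \<rho> g \<in> carrier_mat n n"
    using irr by (simp add: irreducible_rep_def is_rep_def)
  obtain c where "eigenvalue Z c"
    using complex_mat_has_eigenvalue[OF Z] irr by (auto simp: irreducible_rep_def)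
  then obtain v where v: "v \<in> carrier_vec n" "v \<noteq> 0\<^sub>v n" "char_matrix Z c *\<^sub>v v = 0\<^sub>v n"
    using eigenvalue_char_matrix[OF Z] by blast
  have dimZ: "dim_row Z = n" using Z by simp
  have "char_matrix Z c * \<rho> g = \<rho> g * char_matrix Z c" if g: "g \<in> G" for g
    using Z \<rho>[OF g] com[OF g] mult_smult_assoc_mat[OF one_carrier_mat \<rho>[OF g]]
      mult_smult_distrib[OF \<rho>[OF g] one_carrier_mat]
    by (simp add: char_matrix_def dimZ add_mult_distrib_mat mult_add_distrib_mat
        mult_smult_assoc_mat mult_smult_distrib)
  then have "char_matrix Z c = 0\<^sub>m n n"
    using intertwiner_eq_zero_if_singular[OF irr _ \<rho> _ v] Z by auto
  then have "Z = c \<cdot>\<^sub>m 1\<^sub>m n"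
    using Z by (auto simp: char_matrix_def dimZ mat_eq_iff)
  then show ?thesis by (rule that)
qed

section \<open>Characters of a finite left quasigroup\<close>

lemma is_rep_carrier: "is_rep G mul e n \<rho> \<Longrightarrow> g \<in> G \<Longrightarrow> \<rho> g \<in> carrier_mat n n"
  by (simp add: is_rep_def)

lemma is_rep_mult: "is_rep G mul e n \<rho> \<Longrightarrow> g \<in> G \<Longrightarrow> g' \<in> G \<Longrightarrow> \<rho> (mul g g') = \<rho> g * \<rho> g'"
  by (simp add: is_rep_def)

lemma is_rep_unit: "is_rep G mul e n \<rho> \<Longrightarrow> \<rho> e = 1\<^sub>m n"
  by (simp add: is_rep_def)

lemma rep_iso_on_trace_eq:
  assumes "rep_iso_on S n \<rho> n' \<rho>'" and "g \<in> S"
    and \<rho>: "\<rho> g \<in> carrier_mat n n" and \<rho>': "\<rho>' g \<in> carrier_mat n n"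
  shows "mat_trace (\<rho> g) = mat_trace (\<rho>' g)"
proof -
  obtain P where P: "P \<in> carrier_mat n n" "invertible_mat P" and PS: "P * \<rho> g = \<rho>' g * P"
    using assms(1,2) by (auto simp: rep_iso_on_def)
  obtain Q where Q: "Q \<in> carrier_mat n n" "P * Q = 1\<^sub>m n" "Q * P = 1\<^sub>m n"
    using invertible_matE[OF P(2,1)] .
  have "\<rho>' g = \<rho>' g * P * Q"
    using P(1) Q \<rho>' by (simp add: assoc_mult_mat[OF \<rho>' P(1) Q(1)])
  also have "\<dots> = P * \<rho> g * Q" using PS by simp
  finally show ?thesis using mat_trace_similar[OF \<rho> P(1) Q(1,2)] by simp
qed

text \<open>For U this spares a proof that its
  multiplication is associative; unitriangularity of the coefficients gives the bijectivity.\<close>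

locale finite_left_quasigroup =
  fixes G :: "'g set" and mul :: "'g \<Rightarrow> 'g \<Rightarrow> 'g" and e :: 'g
  assumes finite_carrier: "finite G"
    and unit_closed: "e \<in> G"
    and left_translation_bij: "a \<in> G \<Longrightarrow> bij_betw (mul a) G G"
begin

lemma mul_closed: "a \<in> G \<Longrightarrow> b \<in> G \<Longrightarrow> mul a b \<in> G"
  using left_translation_bij bij_betwE by blast

definition rinv :: "'g \<Rightarrow> 'g" where
  "rinv a = (THE b. b \<in> G \<and> mul a b = e)"

lemma rinv: assumes "a \<in> G" shows "rinv a \<in> G" and "mul a (rinv a) = e"
proof -
  have bij: "bij_betw (mul a) G G" by (rule left_translation_bij[OF assms])
  then obtain b where b: "b \<in> G" "mul a b = e"
    using unit_closed by (metis bij_betw_iff_bijections)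
  have "\<exists>!b. b \<in> G \<and> mul a b = e"
    using b bij by (auto simp: bij_betw_def inj_on_def)
  then have "rinv a \<in> G \<and> mul a (rinv a) = e"
    unfolding rinv_def by (rule theI')
  then show "rinv a \<in> G" "mul a (rinv a) = e" by auto
qed

lemma rep_rinv:
  assumes \<rho>: "is_rep G mul e n \<rho>" and a: "a \<in> G"
  shows "\<rho> a * \<rho> (rinv a) = 1\<^sub>m n" and "\<rho> (rinv a) * \<rho> a = 1\<^sub>m n"
proof -
  show ar: "\<rho> a * \<rho> (rinv a) = 1\<^sub>m n"
    using is_rep_mult[OF \<rho> a rinv(1)[OF a]] is_rep_unit[OF \<rho>] rinv(2)[OF a] by simp
  show "\<rho> (rinv a) * \<rho> a = 1\<^sub>m n"
    using mat_mult_left_right_inverse[OF _ _ ar] is_rep_carrier[OF \<rho>] a rinv(1)[OF a] by blast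
qed

lemma rep_trace_conj:
  assumes \<rho>: "is_rep G mul e n \<rho>" and G: "x \<in> G" "g \<in> G" "g' \<in> G"
    and conj: "mul x g = mul g' x"
  shows "mat_trace (\<rho> g) = mat_trace (\<rho> g')"
proof -
  note c = is_rep_carrier[OF \<rho>]
  define R where "R = \<rho> (rinv x)"
  have R: "R \<in> carrier_mat n n" "R * \<rho> x = 1\<^sub>m n"
    using c rinv(1) rep_rinv(2)[OF \<rho>] G by (auto simp: R_def)
  have "\<rho> g = R * \<rho> x * \<rho> g" using R c[OF G(2)] by simp
  also have "\<dots> = R * (\<rho> x * \<rho> g)" by (rule assoc_mult_mat[OF R(1) c[OF G(1)] c[OF G(2)]])
  also have "\<rho> x * \<rho> g = \<rho> g' * \<rho> x" using conj G is_rep_mult[OF \<rho>] by metis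
  also have "R * (\<rho> g' * \<rho> x) = R * \<rho> g' * \<rho> x"
    by (rule assoc_mult_mat[OF R(1) c[OF G(3)] c[OF G(1)], symmetric])
  finally show ?thesis using mat_trace_similar[OF c[OF G(3)] R(1) c[OF G(1)] R(2)] by simp
qed


lemma rep_trace_twisted:
  assumes \<rho>: "is_rep G mul e n \<rho>" and G: "x \<in> G" "g \<in> G" "t \<in> G"
    and t: "\<rho> t = z \<cdot>\<^sub>m 1\<^sub>m n" and z: "z \<noteq> 1"
    and twist: "mul x g = mul (mul g t) x"
  shows "mat_trace (\<rho> g) = 0"
proof -
  note c = is_rep_carrier[OF \<rho>]
  define R where "R = \<rho> (rinv x)"
  have R: "R \<in> carrier_mat n n" "R * \<rho> x = 1\<^sub>m n"
    using c rinv(1) rep_rinv(2)[OF \<rho>] G by (auto simp: R_def)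
  have gt: "\<rho> (mul g t) = z \<cdot>\<^sub>m \<rho> g"
    using c[OF G(2)] mult_smult_distrib[OF c[OF G(2)] one_carrier_mat]
    by (simp add: is_rep_mult[OF \<rho> G(2,3)] t)
  have "\<rho> x * \<rho> g = \<rho> (mul g t) * \<rho> x"
    using twist G mul_closed is_rep_mult[OF \<rho>] by metis
  also have "\<dots> = z \<cdot>\<^sub>m (\<rho> g * \<rho> x)"
    by (simp add: gt mult_smult_assoc_mat[OF c[OF G(2)] c[OF G(1)]])
  finally have comm: "\<rho> x * \<rho> g = z \<cdot>\<^sub>m (\<rho> g * \<rho> x)" .
  have "\<rho> g = R * \<rho> x * \<rho> g" using R c[OF G(2)] by simp
  also have "\<dots> = R * (z \<cdot>\<^sub>m (\<rho> g * \<rho> x))"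
    by (simp add: assoc_mult_mat[OF R(1) c[OF G(1)] c[OF G(2)]] comm)
  also have "\<dots> = z \<cdot>\<^sub>m (R * \<rho> g * \<rho> x)"
    by (simp add: mult_smult_distrib[OF R(1) mult_carrier_mat[OF c[OF G(2)] c[OF G(1)]]]
        assoc_mult_mat[OF R(1) c[OF G(2)] c[OF G(1)]])
  finally have "mat_trace (\<rho> g) = z * mat_trace (R * \<rho> g * \<rho> x)"
    using mat_trace_smult[OF mult_carrier_mat[OF mult_carrier_mat[OF R(1) c[OF G(2)]] c[OF G(1)]]]
    by metis
  then have "mat_trace (\<rho> g) = z * mat_trace (\<rho> g)"
    using mat_trace_similar[OF c[OF G(2)] R(1) c[OF G(1)] R(2)] by simp
  then show ?thesis using z by simp
qed

definition average :: "nat \<Rightarrow> ('g \<Rightarrow> complex mat) \<Rightarrow> ('g \<Rightarrow> complex mat) \<Rightarrow> complex mat \<Rightarrow> complex mat" where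
  "average n \<rho>' \<rho> X = mat_sum n G (\<lambda>g. \<rho>' g * X * \<rho> (rinv g))"

lemma average_carrier [simp]: "average n \<rho>' \<rho> X \<in> carrier_mat n n"
  by (simp add: average_def)

lemma rep_rinv_mult:
  assumes \<rho>: "is_rep G mul e n \<rho>" and h: "h \<in> G" and g: "g \<in> G"
  shows "\<rho> (rinv (mul h g)) * \<rho> h = \<rho> (rinv g)"
proof -
  note c = is_rep_carrier[OF \<rho>]
  have hg: "mul h g \<in> G" using mul_closed h g .
  define R where "R = \<rho> (rinv (mul h g))"
  have R: "R \<in> carrier_mat n n" "R * \<rho> (mul h g) = 1\<^sub>m n"
    using c rinv(1) rep_rinv(2)[OF \<rho>] hg by (auto simp: R_def)
  have "R * \<rho> h = R * \<rho> h * (\<rho> g * \<rho> (rinv g))"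
    using right_mult_one_mat[OF mult_carrier_mat[OF R(1) c[OF h]]] rep_rinv(1)[OF \<rho> g] by simp
  also have "\<dots> = R * (\<rho> h * \<rho> g) * \<rho> (rinv g)"
    using assoc_mult_mat[OF R(1) c[OF h] mult_carrier_mat[OF c[OF g] c[OF rinv(1)[OF g]]]]
      assoc_mult_mat[OF R(1) mult_carrier_mat[OF c[OF h] c[OF g]] c[OF rinv(1)[OF g]]]
      assoc_mult_mat[OF c[OF h] c[OF g] c[OF rinv(1)[OF g]]]
    by simp
  also have "\<dots> = \<rho> (rinv g)"
    using R c[OF rinv(1)[OF g]] is_rep_mult[OF \<rho> h g] by simp
  finally show ?thesis by (simp add: R_def)
qed

lemma average_intertwines:
  assumes \<rho>: "is_rep G mul e n \<rho>" and \<rho>': "is_rep G mul e n \<rho>'"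
    and X: "X \<in> carrier_mat n n" and h: "h \<in> G"
  shows "average n \<rho>' \<rho> X * \<rho> h = \<rho>' h * average n \<rho>' \<rho> X"
proof -
  note c = is_rep_carrier[OF \<rho>] and c' = is_rep_carrier[OF \<rho>']
  define M where "M g = \<rho>' g * X * \<rho> (rinv g)" for g
  have M: "M g \<in> carrier_mat n n" if "g \<in> G" for g
    using that X c c' rinv(1) by (metis M_def mult_carrier_mat)
  have "\<rho>' h * M g = M (mul h g) * \<rho> h" if g: "g \<in> G" for g
  proof -
    have hg: "mul h g \<in> G" using mul_closed h g .
    have "M (mul h g) * \<rho> h = \<rho>' (mul h g) * X * (\<rho> (rinv (mul h g)) * \<rho> h)"
      unfolding M_def
      by (rule assoc_mult_mat[OF mult_carrier_mat[OF c'[OF hg] X] c[OF rinv(1)[OF hg]] c[OF h]])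
    also have "\<dots> = \<rho>' h * \<rho>' g * X * \<rho> (rinv g)"
      using rep_rinv_mult[OF \<rho> h g] is_rep_mult[OF \<rho>' h g] by simp
    also have "\<dots> = \<rho>' h * M g"
      unfolding M_def
      using assoc_mult_mat[OF c'[OF h] c'[OF g] X]
        assoc_mult_mat[OF c'[OF h] mult_carrier_mat[OF c'[OF g] X] c[OF rinv(1)[OF g]]]
      by simp
    finally show ?thesis by simp
  qed
  then have "mat_sum n G (\<lambda>g. \<rho>' h * M g) = mat_sum n G (\<lambda>g. M (mul h g) * \<rho> h)"
    by (simp add: mat_sum_def)
  also have "\<dots> = mat_sum n G (\<lambda>g. M g * \<rho> h)"
    using sum.reindex_bij_betw[OF left_translation_bij[OF h], of "\<lambda>g. (M g * \<rho> h) $$ _"]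
    by (simp add: mat_sum_def)
  finally show ?thesis
    using mult_mat_sum_left[of "\<rho>' h" n G M, OF c'[OF h] M]
      mult_mat_sum_right[of "\<rho> h" n G M, OF c[OF h] M]
    unfolding average_def M_def[symmetric] by simp
qed

lemma sum_diag_average_mat_unit:
  assumes \<rho>: "is_rep G mul e n \<rho>" and \<rho>': "is_rep G mul e n \<rho>'"
  shows "(\<Sum>i<n. \<Sum>j<n. average n \<rho>' \<rho> (mat_unit n i j) $$ (i, j))
    = (\<Sum>g\<in>G. mat_trace (\<rho>' g) * mat_trace (\<rho> (rinv g)))"
proof -
  note c = is_rep_carrier[OF \<rho>] and c' = is_rep_carrier[OF \<rho>']
  have "(\<Sum>i<n. \<Sum>j<n. average n \<rho>' \<rho> (mat_unit n i j) $$ (i, j))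
      = (\<Sum>i<n. \<Sum>j<n. \<Sum>g\<in>G. \<rho>' g $$ (i, i) * \<rho> (rinv g) $$ (j, j))"
    using c c' rinv(1) by (auto simp: average_def index_mult_mat_unit intro!: sum.cong)
  also have "\<dots> = (\<Sum>i<n. \<Sum>g\<in>G. \<Sum>j<n. \<rho>' g $$ (i, i) * \<rho> (rinv g) $$ (j, j))"
    by (intro sum.cong refl) (rule sum.swap)
  also have "\<dots> = (\<Sum>g\<in>G. \<Sum>i<n. \<Sum>j<n. \<rho>' g $$ (i, i) * \<rho> (rinv g) $$ (j, j))"
    by (rule sum.swap)
  also have "\<dots> = (\<Sum>g\<in>G. (\<Sum>i<n. \<rho>' g $$ (i, i)) * (\<Sum>j<n. \<rho> (rinv g) $$ (j, j)))"
    by (simp add: sum_product)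
  also have "\<dots> = (\<Sum>g\<in>G. mat_trace (\<rho>' g) * mat_trace (\<rho> (rinv g)))"
    by (intro sum.cong refl) (simp add: mat_trace_carrier[OF c] mat_trace_carrier[OF c'] rinv(1))
  finally show ?thesis .
qed

lemma average_self_mat_unit:
  assumes irr: "irreducible_rep G mul e n \<rho>" and i: "i < n" and j: "j < n"
  shows "average n \<rho> \<rho> (mat_unit n i j) $$ (i, j) = (if i = j then of_nat (card G) / of_nat n else 0)"
proof -
  have \<rho>: "is_rep G mul e n \<rho>" and n: "n > 0" using irr by (auto simp: irreducible_rep_def)
  note c = is_rep_carrier[OF \<rho>]
  define Z where "Z = average n \<rho> \<rho> (mat_unit n i j)"
  obtain a where Za: "Z = a \<cdot>\<^sub>m 1\<^sub>m n"
    using commuting_mat_scalar[OF irr average_carrier average_intertwines[OF \<rho> \<rho> mat_unit_carrier]]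
    by (auto simp: Z_def)
  have "\<rho> g * mat_unit n i j * \<rho> (rinv g) \<in> carrier_mat n n" if "g \<in> G" for g
    using that c rinv(1) by (metis mult_carrier_mat mat_unit_carrier)
  then have "mat_trace Z = (\<Sum>g\<in>G. mat_trace (\<rho> g * mat_unit n i j * \<rho> (rinv g)))"
    by (simp add: Z_def average_def mat_trace_mat_sum)
  also have "\<dots> = (\<Sum>g\<in>G. mat_trace (mat_unit n i j))"
    using c rinv(1) rep_rinv(1)[OF \<rho>] by (intro sum.cong refl mat_trace_similar) auto
  finally have "a * of_nat n = of_nat (card G) * (if i = j then 1 else 0)"
    using Za i by (simp add: mat_trace_smult[OF one_carrier_mat] mat_trace_one mat_trace_mat_unit)
  then have "a = of_nat (card G) * (if i = j then 1 else 0) / of_nat n"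
    using n by (simp add: field_simps)
  then show ?thesis using i j by (simp add: Z_def[symmetric] Za)
qed

theorem rep_iso_if_trace_eq:
  assumes irr: "irreducible_rep G mul e n \<rho>" and \<rho>': "is_rep G mul e n \<rho>'"
    and trace_eq: "\<And>g. g \<in> G \<Longrightarrow> mat_trace (\<rho> g) = mat_trace (\<rho>' g)"
  shows "rep_iso_on G n \<rho> n \<rho>'"
proof -
  have \<rho>: "is_rep G mul e n \<rho>" and n: "n > 0" using irr by (auto simp: irreducible_rep_def)
  have "(\<Sum>i<n. \<Sum>j<n. average n \<rho>' \<rho> (mat_unit n i j) $$ (i, j))
      = (\<Sum>i<n. \<Sum>j<n. average n \<rho> \<rho> (mat_unit n i j) $$ (i, j))"
    using trace_eq by (simp add: sum_diag_average_mat_unit[OF \<rho> \<rho>'] sum_diag_average_mat_unit[OF \<rho> \<rho>])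
  also have "\<dots> = (\<Sum>i<n. \<Sum>j<n. if i = j then of_nat (card G) / of_nat n else 0)"
    by (intro sum.cong refl) (simp add: average_self_mat_unit[OF irr])
  also have "\<dots> = of_nat (card G)"
    using n by simp
  also have "\<dots> \<noteq> 0" using finite_carrier unit_closed by (auto simp: card_gt_0_iff)
  finally obtain i j where "i < n" "j < n" and nz: "average n \<rho>' \<rho> (mat_unit n i j) $$ (i, j) \<noteq> 0"
    by (metis (no_types, lifting) lessThan_iff sum.neutral)
  define M where "M = average n \<rho>' \<rho> (mat_unit n i j)"
  have inter: "\<And>g. g \<in> G \<Longrightarrow> M * \<rho> g = \<rho>' g * M"
    by (simp add: M_def average_intertwines[OF \<rho> \<rho>'])
  have "M \<noteq> 0\<^sub>m n n" using nz \<open>i < n\<close> \<open>j < n\<close> by (auto simp: M_def)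
  then have "invertible_mat M"
    using intertwiner_invertible[OF irr _ is_rep_carrier[OF \<rho>'] inter] by (simp add: M_def)
  then show ?thesis using inter by (auto simp: rep_iso_on_def M_def)
qed

end

section \<open>The group U_h^{2,q}\<close>

lemma power_card_UNIV:
  fixes x :: "'f::{field,finite}"
  shows "x ^ card (UNIV :: 'f set) = x"
proof (cases "x = 0")
  case True
  then show ?thesis by (simp add: zero_power finite_UNIV_card_ge_0)
next
  case False
  let ?S = "UNIV - {0::'f}"
  have "bij_betw (\<lambda>y. x * y) ?S ?S"
    using False by (auto simp: bij_betw_def inj_on_def intro!: image_eqI[where x = "y / x" for y])
  then have "(\<Prod>y\<in>?S. y) = (\<Prod>y\<in>?S. x * y)"
    using prod.reindex_bij_betw[of "\<lambda>y. x * y" ?S ?S "\<lambda>y. y"] by simp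
  also have "\<dots> = x ^ card ?S * (\<Prod>y\<in>?S. y)"
    by (simp add: prod.distrib)
  finally have "x ^ card ?S = 1" by simp
  moreover obtain m where "card (UNIV :: 'f set) = Suc m"
    using finite_UNIV_card_ge_0[where 'a = 'f] by (metis Suc_pred finite)
  ultimately show ?thesis by (simp add: card_Diff_singleton)
qed

lemma frobenius_power_parity:
  fixes x :: "'f::field"
  assumes fq: "\<And>y::'f. y ^ q\<^sup>2 = y"
  shows "x ^ q ^ i = (if even i then x else x ^ q)"
proof (induction i)
  case (Suc i)
  have "x ^ q ^ Suc i = (x ^ q ^ i) ^ q" by (simp add: power_mult[symmetric] mult.commute)
  also have "(x ^ q) ^ q = x" using fq by (simp add: power_mult[symmetric] power2_eq_square)
  ultimately show ?case using Suc by auto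
qed simp

lemma frobenius_twist_commute:
  fixes b w :: "'f::field"
  assumes fq: "\<And>y::'f. y ^ q\<^sup>2 = y" and q: "q > 0"
    and "odd j \<Longrightarrow> b = 0" and "even j \<Longrightarrow> b ^ q = b"
  shows "w * b ^ q = b * w ^ q ^ j"
  using assms frobenius_power_parity[OF fq, of w j] by (cases "even j") (auto simp: mult.commute)

lemma U_carrier_finite: "finite (U_carrier h :: (nat \<Rightarrow> 'f::{field,finite}) set)"
proof (rule finite_subset)
  show "U_carrier h \<subseteq> {a. \<forall>i. (i \<in> {..U_N h} \<longrightarrow> a i \<in> UNIV) \<and> (i \<notin> {..U_N h} \<longrightarrow> a i = 0)}"
    by (auto simp: U_carrier_def)
qed (rule finite_set_of_finite_funs; simp)

lemma U_one_in_carrier: "U_one \<in> U_carrier h"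
  by (simp add: U_one_def U_carrier_def)

lemma U_mult_closed: "a \<in> U_carrier h \<Longrightarrow> b \<in> U_carrier h \<Longrightarrow> U_mult q h a b \<in> U_carrier h"
  by (simp add: U_carrier_def U_mult_def)

lemma U_mult_coeff: "k \<le> U_N h \<Longrightarrow> U_mult q h a b k = (\<Sum>i=0..k. a i * b (k - i) ^ q ^ i)"
  by (simp add: U_mult_def)

lemma U_mult_coeff_left:
  assumes "a \<in> U_carrier h" "k \<le> U_N h"
  shows "U_mult q h a b k = b k + (\<Sum>i\<in>{Suc 0..k}. a i * b (k - i) ^ q ^ i)"
  using assms by (simp add: U_mult_coeff sum.atLeast_Suc_atMost U_carrier_def)

lemma U_mult_coeff_right:
  assumes "b \<in> U_carrier h" "k \<le> U_N h"
  shows "U_mult q h a b k = a k + (\<Sum>i<k. a i * b (k - i) ^ q ^ i)"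
  using assms by (simp add: U_mult_coeff sum.last_plus atLeast0LessThan U_carrier_def)

lemma U_carrier_triangular_inj:
  assumes F: "\<And>b k. b \<in> U_carrier h \<Longrightarrow> k \<le> U_N h \<Longrightarrow> F b k = b k + T k b"
    and T: "\<And>k b b'. (\<And>j. j < k \<Longrightarrow> b j = b' j) \<Longrightarrow> T k b = T k b'"
  shows "inj_on F (U_carrier h)"
proof (rule inj_onI)
  fix b b' assume b: "b \<in> U_carrier h" and b': "b' \<in> U_carrier h" and eq: "F b = F b'"
  show "b = b'"
  proof
    fix k show "b k = b' k"
    proof (induction k rule: less_induct)
      case (less k)
      show ?case
      proof (cases "k \<le> U_N h")
        case True
        have "T k b = T k b'" by (rule T) (rule less.IH)
        then show ?thesis using F[OF b True] F[OF b' True] eq by simp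
      qed (use b b' in \<open>simp add: U_carrier_def\<close>)
    qed
  qed
qed

lemma U_mult_left_bij:
  assumes a: "a \<in> U_carrier h"
  shows "bij_betw (U_mult q h a) (U_carrier h) (U_carrier h :: (nat \<Rightarrow> 'f::{field,finite}) set)"
proof -
  have "inj_on (U_mult q h a) (U_carrier h :: (nat \<Rightarrow> 'f) set)"
  proof (rule U_carrier_triangular_inj[where T = "\<lambda>k b. \<Sum>i\<in>{Suc 0..k}. a i * b (k - i) ^ q ^ i"])
    fix k and b b' :: "nat \<Rightarrow> 'f" assume eq: "\<And>j. j < k \<Longrightarrow> b j = b' j"
    have "b (k - i) = b' (k - i)" if "i \<in> {Suc 0..k}" for i
      using that by (intro eq) auto
    then show "(\<Sum>i\<in>{Suc 0..k}. a i * b (k - i) ^ q ^ i) = (\<Sum>i\<in>{Suc 0..k}. a i * b' (k - i) ^ q ^ i)"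
      by (intro sum.cong) simp_all
  qed (rule U_mult_coeff_left[OF a])
  moreover have "U_mult q h a ` U_carrier h \<subseteq> (U_carrier h :: (nat \<Rightarrow> 'f) set)"
    using U_mult_closed[OF a] by blast
  ultimately show ?thesis
    unfolding bij_betw_def using endo_inj_surj[OF U_carrier_finite] by blast
qed

lemma U_mult_right_bij:
  assumes b: "b \<in> U_carrier h"
  shows "bij_betw (\<lambda>a. U_mult q h a b) (U_carrier h) (U_carrier h :: (nat \<Rightarrow> 'f::{field,finite}) set)"
proof -
  have "inj_on (\<lambda>a. U_mult q h a b) (U_carrier h :: (nat \<Rightarrow> 'f) set)"
  proof (rule U_carrier_triangular_inj[where T = "\<lambda>k a. \<Sum>i<k. a i * b (k - i) ^ q ^ i"])
    fix k and a a' :: "nat \<Rightarrow> 'f" assume "\<And>j. j < k \<Longrightarrow> a j = a' j"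
    then show "(\<Sum>i<k. a i * b (k - i) ^ q ^ i) = (\<Sum>i<k. a' i * b (k - i) ^ q ^ i)"
      by (intro sum.cong) simp_all
  qed (rule U_mult_coeff_right[OF b])
  moreover have "(\<lambda>a. U_mult q h a b) ` U_carrier h \<subseteq> (U_carrier h :: (nat \<Rightarrow> 'f) set)"
    using U_mult_closed[OF _ b] by blast
  ultimately show ?thesis
    unfolding bij_betw_def using endo_inj_surj[OF U_carrier_finite] by blast
qed

lemma U_finite_left_quasigroup:
  "finite_left_quasigroup (U_carrier h :: (nat \<Rightarrow> 'f::{field,finite}) set) (U_mult q h) U_one"
  by unfold_locales (fact U_carrier_finite, fact U_one_in_carrier, fact U_mult_left_bij)

definition U_monomial :: "nat \<Rightarrow> 'f::field \<Rightarrow> nat \<Rightarrow> 'f" where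
  "U_monomial d w = (\<lambda>i. if i = 0 then 1 else if i = d then w else 0)"

lemma U_top_eq_monomial: "U_top h = U_monomial (U_N h)"
  by (simp add: fun_eq_iff U_top_def U_monomial_def)

lemma U_monomial_in_carrier: "1 \<le> d \<Longrightarrow> d \<le> U_N h \<Longrightarrow> U_monomial d w \<in> U_carrier h"
  by (simp add: U_monomial_def U_carrier_def)

lemma U_mult_monomial_left:
  assumes "1 \<le> d" "k \<le> U_N h"
  shows "U_mult q h (U_monomial d w) g k = g k + (if d \<le> k then w * g (k - d) ^ q ^ d else 0)"
proof -
  have "U_mult q h (U_monomial d w) g k
      = (\<Sum>i=0..k. (if i = 0 then g k else 0) + (if i = d then w * g (k - d) ^ q ^ d else 0))"
    unfolding U_mult_coeff[OF assms(2)] using assms(1) by (intro sum.cong) (auto simp: U_monomial_def)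
  then show ?thesis by (simp add: sum.distrib)
qed

lemma U_mult_monomial_right:
  assumes "1 \<le> d" "k \<le> U_N h" "q > 0"
  shows "U_mult q h g (U_monomial d w) k = g k + (if d \<le> k then g (k - d) * w ^ q ^ (k - d) else 0)"
proof -
  have "U_mult q h g (U_monomial d w) k
      = (\<Sum>i=0..k. (if i = k then g k else 0) + (if d \<le> k \<and> i = k - d then g (k - d) * w ^ q ^ (k - d) else 0))"
    unfolding U_mult_coeff[OF assms(2)] using assms(1,3) by (intro sum.cong) (auto simp: U_monomial_def)
  then show ?thesis by (simp add: sum.distrib)
qed

lemma U_mult_top:
  assumes "k \<le> U_N h" "U_N h \<noteq> 0" "g \<in> U_carrier h" "q > 0"
  shows "U_mult q h g (U_top h c) k = g k + (if k = U_N h then c else 0)"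
  using assms U_mult_monomial_right[of "U_N h" k h q g c] by (auto simp: U_top_eq_monomial U_carrier_def)

lemma U_N_even: "even (U_N h)"
  by (simp add: U_N_def)

lemma U_twist_conj:
  fixes g :: "nat \<Rightarrow> 'f::field"
  assumes fq: "\<And>y::'f. y ^ q\<^sup>2 = y" and q: "q > 0" and N: "2 \<le> U_N h"
    and g: "g \<in> U_carrier h" and r: "odd r" "r \<le> U_N h"
    and odd_zero: "\<And>i. i < r \<Longrightarrow> odd i \<Longrightarrow> g i = 0"
    and even_fixed: "\<And>i. i < r \<Longrightarrow> even i \<Longrightarrow> g i ^ q = g i"
  shows "U_mult q h (U_monomial (U_N h - r) w) g =
    U_mult q h (U_mult q h g (U_top h (w * g r ^ q - g r * w ^ q))) (U_monomial (U_N h - r) w)"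
    (is "?L = U_mult q h ?G ?x")
proof
  fix k
  define d where "d = U_N h - r"
  define c where "c = w * g r ^ q - g r * w ^ q"
  have rN: "r < U_N h" using r U_N_even[of h] by (metis le_neq_implies_less)
  then have d: "1 \<le> d" "odd d" using r U_N_even[of h] by (auto simp: d_def)
  have G: "?G j = g j + (if j = U_N h then c else 0)" if "j \<le> U_N h" for j
    using U_mult_top[OF that _ g q] N by (simp add: c_def)
  show "?L k = U_mult q h ?G ?x k"
  proof (cases "k \<le> U_N h")
    case False
    then show ?thesis by (simp add: U_mult_def)
  next
    case True
    have L: "?L k = g k + (if d \<le> k then w * g (k - d) ^ q else 0)"
      using U_mult_monomial_left[OF d(1) True, where w = w and q = q and g = g]
        frobenius_power_parity[OF fq, where i = d] d(2)
      unfolding d_def[symmetric] by simp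
    have R: "U_mult q h ?G ?x k = ?G k + (if d \<le> k then ?G (k - d) * w ^ q ^ (k - d) else 0)"
      unfolding d_def[symmetric] by (rule U_mult_monomial_right[OF d(1) True q])
    show ?thesis
    proof (cases "d \<le> k")
      case False
      then have "k \<noteq> U_N h" by (auto simp: d_def)
      then show ?thesis using L R G[OF True] False by simp
    next
      case True
      define j where "j = k - d"
      have j: "j \<le> r" "j < U_N h" using \<open>k \<le> U_N h\<close> rN by (auto simp: j_def d_def)
      have "w * g j ^ q - g j * w ^ q ^ j = (if k = U_N h then c else 0)"
      proof (cases "j = r")
        case True
        then have "k = U_N h" using \<open>d \<le> k\<close> rN by (auto simp: j_def d_def)
        then show ?thesis using True r(1) frobenius_power_parity[OF fq, of w r] by (simp add: c_def)
      next
        case False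
        then have "j < r" "k \<noteq> U_N h" using j \<open>d \<le> k\<close> by (auto simp: j_def d_def)
        then show ?thesis
          using frobenius_twist_commute[OF fq q odd_zero[OF \<open>j < r\<close>] even_fixed[OF \<open>j < r\<close>]] by simp
      qed
      then show ?thesis
        using L R G[OF \<open>k \<le> U_N h\<close>] G[OF less_imp_le[OF j(2)]] j(2) True
        by (simp add: j_def[symmetric] algebra_simps)
    qed
  qed
qed

lemma U_conj_clears_coeff:
  fixes g g' :: "nat \<Rightarrow> 'f::field"
  assumes fq: "\<And>y::'f. y ^ q\<^sup>2 = y" and q: "q > 0" and r: "odd r" "r \<le> U_N h"
    and odd_zero: "\<And>i. i < r \<Longrightarrow> odd i \<Longrightarrow> g i = 0"
    and e: "even e" "e < r" "g e ^ q \<noteq> g e"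
    and even_fixed: "\<And>i. i < e \<Longrightarrow> even i \<Longrightarrow> g i ^ q = g i"
    and w: "w = g r / (g e - g e ^ q)"
    and conj: "U_mult q h g' (U_monomial (r - e) w) = U_mult q h (U_monomial (r - e) w) g"
  shows "i \<le> r \<Longrightarrow> g' i = (if i = r then 0 else g i)"
proof (induction i rule: less_induct)
  case (less i)
  define d where "d = r - e"
  have d: "1 \<le> d" "odd d" using e r by (auto simp: d_def)
  have i: "i \<le> U_N h" using less.prems r by simp
  have eq: "g' i + (if d \<le> i then g' (i - d) * w ^ q ^ (i - d) else 0)
      = g i + (if d \<le> i then w * g (i - d) ^ q else 0)"
    using U_mult_monomial_right[OF d(1) i q, where g = g' and w = w]
      U_mult_monomial_left[OF d(1) i, where g = g and w = w and q = q] conj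
      frobenius_power_parity[OF fq, where i = d] d(2)
    by (simp add: d_def)
  show ?case
  proof (cases "d \<le> i")
    case False
    then show ?thesis using eq e by (auto simp: d_def)
  next
    case True
    define j where "j = i - d"
    have "j < i" "j \<le> e" using d(1) True less.prems by (auto simp: j_def d_def)
    then have "g' j = g j" using less.IH e by auto
    then have g'i: "g' i = g i + (w * g j ^ q - g j * w ^ q ^ j)"
      using eq True by (simp add: j_def[symmetric] algebra_simps)
    show ?thesis
    proof (cases "j = e")
      case True
      then have "i = r" using \<open>d \<le> i\<close> e by (auto simp: j_def d_def)
      moreover have "w ^ q ^ j = w" using frobenius_power_parity[OF fq, of w j] True e by simp
      moreover have "w * g e ^ q - g e * w = - g r"
      proof -
        have "g e - g e ^ q \<noteq> 0" using e by simp
        then have "w * (g e - g e ^ q) = g r" using w by simp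
        then show ?thesis by (simp add: algebra_simps)
      qed
      ultimately show ?thesis using g'i True by simp
    next
      case False
      then have "j < e" using \<open>j \<le> e\<close> by simp
      then have "i \<noteq> r" using \<open>d \<le> i\<close> e by (auto simp: j_def d_def)
      moreover have "w * g j ^ q = g j * w ^ q ^ j"
        using frobenius_twist_commute[OF fq q] odd_zero even_fixed \<open>j < e\<close> e(2) by force
      ultimately show ?thesis using g'i by simp
    qed
  qed
qed

lemma U_conj_clears_odd_coeff:
  fixes g :: "nat \<Rightarrow> 'f::{field,finite}"
  assumes fq: "\<And>y::'f. y ^ q\<^sup>2 = y" and q: "q > 0"
    and g: "g \<in> U_carrier h" and r: "odd r" "r \<le> U_N h"
    and odd_zero: "\<And>i. i < r \<Longrightarrow> odd i \<Longrightarrow> g i = 0"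
    and e: "even e" "e < r" "g e ^ q \<noteq> g e"
    and even_fixed: "\<And>i. i < e \<Longrightarrow> even i \<Longrightarrow> g i ^ q = g i"
  obtains x g' where "x \<in> U_carrier h" "g' \<in> U_carrier h" "U_mult q h x g = U_mult q h g' x"
    and "\<And>i. i \<le> r \<Longrightarrow> odd i \<Longrightarrow> g' i = 0"
proof -
  define x where "x = U_monomial (r - e) (g r / (g e - g e ^ q))"
  have x: "x \<in> U_carrier h" using e r by (auto simp: x_def intro: U_monomial_in_carrier)
  have "U_mult q h x g \<in> (\<lambda>a. U_mult q h a x) ` U_carrier h"
    using bij_betw_imp_surj_on[OF U_mult_right_bij[OF x, where q = q]] U_mult_closed[OF x g] by simp
  then obtain g' where g': "g' \<in> U_carrier h" and conj: "U_mult q h g' x = U_mult q h x g"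
    by auto
  have "g' i = 0" if "i \<le> r" "odd i" for i
    using U_conj_clears_coeff[OF fq q r odd_zero e even_fixed refl conj[unfolded x_def] that(1)]
      odd_zero that by (auto simp: x_def)
  then show ?thesis using that x g' conj by metis
qed

lemma U_clear_or_twist_odd_coeff:
  fixes g :: "nat \<Rightarrow> 'f::{field,finite}"
  assumes fq: "\<And>y::'f. y ^ q\<^sup>2 = y" and q: "q > 0" and N: "2 \<le> U_N h"
    and g: "g \<in> U_carrier h" and r: "odd r" "r \<le> U_N h"
    and odd_zero: "\<forall>i<r. odd i \<longrightarrow> g i = 0"
  shows "(\<exists>x\<in>U_carrier h. \<exists>g'\<in>U_carrier h. U_mult q h x g = U_mult q h g' x \<and> (\<forall>i\<le>r. odd i \<longrightarrow> g' i = 0))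
    \<or> (\<forall>w. \<exists>x\<in>U_carrier h. U_mult q h x g = U_mult q h (U_mult q h g (U_top h (w * g r ^ q - g r * w ^ q))) x)"
proof (cases "\<forall>i<r. even i \<longrightarrow> g i ^ q = g i")
  case True
  have "r \<noteq> U_N h" using r(1) U_N_even[of h] by metis
  then have "U_N h - r \<ge> 1" using r by simp
  then have "U_monomial (U_N h - r) w \<in> U_carrier h" for w
    by (simp add: U_monomial_in_carrier)
  moreover have "U_mult q h (U_monomial (U_N h - r) w) g = U_mult q h
      (U_mult q h g (U_top h (w * g r ^ q - g r * w ^ q))) (U_monomial (U_N h - r) w)" for w
    using U_twist_conj[OF fq q N g r] odd_zero True by blast
  ultimately show ?thesis by blast
next
  case False
  define e where "e = (LEAST i. i < r \<and> even i \<and> g i ^ q \<noteq> g i)"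
  have e: "e < r" "even e" "g e ^ q \<noteq> g e"
    using False LeastI_ex[of "\<lambda>i. i < r \<and> even i \<and> g i ^ q \<noteq> g i"] by (auto simp: e_def)
  have "g i ^ q = g i" if "i < e" "even i" for i
    using not_less_Least[of i "\<lambda>i. i < r \<and> even i \<and> g i ^ q \<noteq> g i"] that e by (auto simp: e_def)
  then obtain x g' where "x \<in> U_carrier h" "g' \<in> U_carrier h" "U_mult q h x g = U_mult q h g' x"
    and "\<And>i. i \<le> r \<Longrightarrow> odd i \<Longrightarrow> g' i = 0"
    using U_conj_clears_odd_coeff[OF fq q g r _ e(2,1,3)] odd_zero by blast
  then show ?thesis by blast
qed

lemma U_carrier_induct:
  fixes g :: "nat \<Rightarrow> 'f::{field,finite}"
  assumes g: "g \<in> U_carrier h" and fq: "\<And>y::'f. y ^ q\<^sup>2 = y" and q: "q > 0" and N: "2 \<le> U_N h"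
    and H: "\<And>g. g \<in> U_H h \<Longrightarrow> P g"
    and conj: "\<And>g g' x. g \<in> U_carrier h \<Longrightarrow> g' \<in> U_carrier h \<Longrightarrow> x \<in> U_carrier h \<Longrightarrow>
      U_mult q h x g = U_mult q h g' x \<Longrightarrow> P g' \<Longrightarrow> P g"
    and twist: "\<And>g b. g \<in> U_carrier h \<Longrightarrow> b \<noteq> 0 \<Longrightarrow>
      (\<And>w. \<exists>x\<in>U_carrier h. U_mult q h x g = U_mult q h (U_mult q h g (U_top h (w * b ^ q - b * w ^ q))) x) \<Longrightarrow>
      P g"
  shows "P g"
proof -
  have "\<forall>g\<in>U_carrier h. (\<forall>i<r. odd i \<longrightarrow> g i = 0) \<longrightarrow> P g" if "r \<le> Suc (U_N h)" for r
    using that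
  proof (induction r rule: inc_induct)
    case base
    show ?case
      using H by (auto simp: U_H_def U_carrier_def) (metis not_less_eq)
  next
    case (step r)
    show ?case
    proof (intro ballI impI)
      fix g :: "nat \<Rightarrow> 'f" assume g: "g \<in> U_carrier h" and odd_zero: "\<forall>i<r. odd i \<longrightarrow> g i = 0"
      have r: "r \<le> U_N h" using step.hyps by simp
      show "P g"
      proof (cases "even r \<or> g r = 0")
        case True
        then show ?thesis using step.IH g odd_zero less_Suc_eq by auto
      next
        case False
        then have "odd r" "g r \<noteq> 0" by auto
        from U_clear_or_twist_odd_coeff[OF fq q N g \<open>odd r\<close> r odd_zero]
        show ?thesis
        proof (elim disjE bexE conjE)
          fix x g' assume "x \<in> U_carrier h" "g' \<in> U_carrier h" "U_mult q h x g = U_mult q h g' x"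
            and "\<forall>i\<le>r. odd i \<longrightarrow> g' i = 0"
          moreover from this(2,4) have "P g'" using step.IH less_Suc_eq_le by blast
          ultimately show ?thesis using conj[OF g] by blast
        next
          assume "\<forall>w. \<exists>x\<in>U_carrier h.
            U_mult q h x g = U_mult q h (U_mult q h g (U_top h (w * g r ^ q - g r * w ^ q))) x"
          then show ?thesis using twist[OF g \<open>g r \<noteq> 0\<close>] by blast
        qed
      qed
    qed
  qed
  then show ?thesis using g by blast
qed

lemma additive_char_twist_nontrivial:
  fixes \<psi> :: "'f::field \<Rightarrow> complex"
  assumes fq: "\<And>y::'f. y ^ q\<^sup>2 = y" and \<psi>: "additive_char \<psi>" and conductor: "\<exists>x. \<psi> (x ^ q) \<noteq> \<psi> x"
    and b: "b \<noteq> 0"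
  obtains w where "\<psi> (w * b ^ q - b * w ^ q) \<noteq> 1"
proof -
  obtain x where x: "\<psi> (x ^ q) \<noteq> \<psi> x" using conductor by blast
  define w where "w = (x / b) ^ q"
  have "w ^ q = x / b"
    using fq[of "x / b"] by (simp add: w_def power_mult[symmetric] power2_eq_square)
  then have "w * b ^ q - b * w ^ q = x ^ q - x"
    using b by (simp add: w_def power_mult_distrib[symmetric])
  moreover have "\<psi> (x ^ q - x) * \<psi> x = \<psi> (x ^ q)"
    using \<psi> unfolding additive_char_def by (metis diff_add_cancel)
  then have "\<psi> (x ^ q - x) \<noteq> 1" using x by auto
  ultimately show ?thesis using that[of w] by simp
qed

lemma U_rep_trace_eq:
  fixes \<rho> \<rho>' :: "(nat \<Rightarrow> 'f::{field,finite}) \<Rightarrow> complex mat" and \<psi> :: "'f \<Rightarrow> complex"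
  assumes fq: "\<And>y::'f. y ^ q\<^sup>2 = y" and q: "q > 0" and N: "2 \<le> U_N h"
    and \<psi>: "additive_char \<psi>" and conductor: "\<exists>x. \<psi> (x ^ q) \<noteq> \<psi> x"
    and \<rho>: "is_rep (U_carrier h) (U_mult q h) U_one n \<rho>" "\<And>x. \<rho> (U_top h x) = \<psi> x \<cdot>\<^sub>m 1\<^sub>m n"
    and \<rho>': "is_rep (U_carrier h) (U_mult q h) U_one n \<rho>'" "\<And>x. \<rho>' (U_top h x) = \<psi> x \<cdot>\<^sub>m 1\<^sub>m n"
    and on_H: "\<And>g. g \<in> U_H h \<Longrightarrow> mat_trace (\<rho> g) = mat_trace (\<rho>' g)"
    and g: "g \<in> U_carrier h"
  shows "mat_trace (\<rho> g) = mat_trace (\<rho>' g)"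
proof -
  interpret U: finite_left_quasigroup "U_carrier h :: (nat \<Rightarrow> 'f) set" "U_mult q h" U_one
    by (rule U_finite_left_quasigroup)
  have top: "U_top h c \<in> U_carrier h" for c
    using N by (simp add: U_top_eq_monomial U_monomial_in_carrier)
  show ?thesis
  proof (rule U_carrier_induct[OF g fq q N])
    fix g g' x assume "g \<in> U_carrier h" "g' \<in> U_carrier h" "x \<in> U_carrier h"
      and "U_mult q h x g = U_mult q h g' x" and "mat_trace (\<rho> g') = mat_trace (\<rho>' g')"
    then show "mat_trace (\<rho> g) = mat_trace (\<rho>' g)"
      using U.rep_trace_conj[OF \<rho>(1)] U.rep_trace_conj[OF \<rho>'(1)] by metis
  next
    fix g :: "nat \<Rightarrow> 'f" and b :: 'f assume g: "g \<in> U_carrier h" and "b \<noteq> 0"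
      and twist: "\<And>w. \<exists>x\<in>U_carrier h.
        U_mult q h x g = U_mult q h (U_mult q h g (U_top h (w * b ^ q - b * w ^ q))) x"
    obtain w where w: "\<psi> (w * b ^ q - b * w ^ q) \<noteq> 1"
      using additive_char_twist_nontrivial[OF fq \<psi> conductor \<open>b \<noteq> 0\<close>] .
    then obtain x where "x \<in> U_carrier h"
      and "U_mult q h x g = U_mult q h (U_mult q h g (U_top h (w * b ^ q - b * w ^ q))) x"
      using twist by blast
    then show "mat_trace (\<rho> g) = mat_trace (\<rho>' g)"
      using U.rep_trace_twisted[OF \<rho>(1) _ g top \<rho>(2) w] U.rep_trace_twisted[OF \<rho>'(1) _ g top \<rho>'(2) w]
      by simp
  qed (rule on_H)
qed

theorem corollary3p3:
  fixes p q k h n n' :: nat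
    and \<psi> :: "'f::{field,finite} \<Rightarrow> complex"
    and \<rho> \<rho>' :: "(nat \<Rightarrow> 'f) \<Rightarrow> complex mat"
  assumes "prime p" and "k \<ge> 1" and "q = p ^ k" and "h \<ge> 2"
    and "card (UNIV :: 'f set) = q ^ 2"
    and "additive_char \<psi>" and "\<exists>x. \<psi> (x ^ q) \<noteq> \<psi> x"
    and "irreducible_rep (U_carrier h) (U_mult q h) U_one n \<rho>"
    and "\<forall>x. \<rho> (U_top h x) = \<psi> x \<cdot>\<^sub>m 1\<^sub>m n"
    and "irreducible_rep (U_carrier h) (U_mult q h) U_one n' \<rho>'"
    and "\<forall>x. \<rho>' (U_top h x) = \<psi> x \<cdot>\<^sub>m 1\<^sub>m n'"
    and "rep_iso_on (U_H h) n \<rho> n' \<rho>'"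
  shows "rep_iso_on (U_carrier h) n \<rho> n' \<rho>'"
proof -
  interpret U: finite_left_quasigroup "U_carrier h :: (nat \<Rightarrow> 'f) set" "U_mult q h" U_one
    by (rule U_finite_left_quasigroup)
  have n': "n' = n" using assms(12) by (simp add: rep_iso_on_def)
  have \<rho>: "is_rep (U_carrier h) (U_mult q h) U_one n \<rho>"
    and \<rho>': "is_rep (U_carrier h) (U_mult q h) U_one n \<rho>'"
    using assms(8,10) n' by (simp_all add: irreducible_rep_def)
  have fq: "y ^ q\<^sup>2 = y" for y :: 'f using power_card_UNIV[of y] assms(5) by simp
  have "q > 0" using assms(1,3) by (simp add: prime_gt_0_nat)
  moreover have "2 \<le> U_N h" using assms(4) by (simp add: U_N_def)
  moreover have "mat_trace (\<rho> g) = mat_trace (\<rho>' g)" if "g \<in> U_H h" for g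
    using rep_iso_on_trace_eq[OF assms(12) that] that is_rep_carrier[OF \<rho>] is_rep_carrier[OF \<rho>'] n'
    by (simp add: U_H_def)
  ultimately have "mat_trace (\<rho> g) = mat_trace (\<rho>' g)" if "g \<in> U_carrier h" for g
    using U_rep_trace_eq[OF fq _ _ assms(6,7) \<rho> _ \<rho>'] assms(9,11) n' that by simp
  then show ?thesis using U.rep_iso_if_trace_eq[OF assms(8) \<rho>'] n' by simp
qed

end
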